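(* Let $0<r<1$ be fixed and let $T:\mathrm{Hol}(\mathbb{D})\to\mathrm{Hol}(\mathbb{D})$ be a linear continuous operator such that for all $f\in\mathrm{Hol}(\mathbb{D})$, \[ \|Tf\|_{\infty,r}=\|f\|_{\infty,r},\qquad\text{where } \|f\|_{\infty,r}=\sup_{|z|\le r}|f(z)|. \] Then there exist a map $B_1$, which is either constant or a finite Blaschke product, and $\beta\in\mathbb{C}$ with $|\beta|=1$, such that for all $f\in\mathrm{Hol}(\mathbb{D})$ and $z\in\mathbb{D}$, \[ (Tf)(z)=B_1(z/r)\,f(\beta z). \]
   Context: $\mathbb{D}$ is the open unit disc and $\mathrm{Hol}(\mathbb{D})$ the space of holomorphic functions on $\mathbb{D}$ with the topology of uniform convergence on compact subsets. A finite Blaschke product is a function of the form $z\mapsto c\prod_{j=1}^{n}\frac{z-a_j}{1-\overline{a_j}z}$ with $|c|=1$, $n\ge1$ and $a_1,\dots,a_n\in\mathbb{D}$. *)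

theory Defs
  imports "HOL-Analysis.Analysis"
begin

definition sup_norm_r :: "real \<Rightarrow> (complex \<Rightarrow> complex) \<Rightarrow> real" where
  "sup_norm_r r f = Sup {cmod (f z) | z. cmod z \<le> r}"

definition hol_conv :: "(nat \<Rightarrow> complex \<Rightarrow> complex) \<Rightarrow> (complex \<Rightarrow> complex) \<Rightarrow> bool" where
  "hol_conv F f \<longleftrightarrow>
     (\<forall>K. compact K \<and> K \<subseteq> ball 0 1 \<longrightarrow> uniform_limit K F f sequentially)"

text \<open>Linear continuous operator on Hol(D).  Functions are identified when they agree
  on the disc; Hol(D) is a Frechet (metrizable) space, so continuity is sequential continuity.\<close>
definition hol_operator :: "((complex \<Rightarrow> complex) \<Rightarrow> (complex \<Rightarrow> complex)) \<Rightarrow> bool" where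
  "hol_operator T \<longleftrightarrow>
     (\<forall>f. f holomorphic_on ball 0 1 \<longrightarrow> T f holomorphic_on ball 0 1) \<and>
     (\<forall>f g. f holomorphic_on ball 0 1 \<longrightarrow> g holomorphic_on ball 0 1 \<longrightarrow>
        (\<forall>z\<in>ball 0 1. T (\<lambda>w. f w + g w) z = T f z + T g z)) \<and>
     (\<forall>f c. f holomorphic_on ball 0 1 \<longrightarrow>
        (\<forall>z\<in>ball 0 1. T (\<lambda>w. c * f w) z = c * T f z)) \<and>
     (\<forall>F f. (\<forall>n. F n holomorphic_on ball 0 1) \<longrightarrow> f holomorphic_on ball 0 1 \<longrightarrow>
        hol_conv F f \<longrightarrow> hol_conv (\<lambda>n. T (F n)) (T f))"

definition finite_blaschke :: "(complex \<Rightarrow> complex) \<Rightarrow> bool" where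
  "finite_blaschke B \<longleftrightarrow>
     (\<exists>(c::complex) (n::nat) (a::nat \<Rightarrow> complex). cmod c = 1 \<and> n \<ge> 1 \<and> (\<forall>j<n. a j \<in> ball 0 1) \<and>
        (\<forall>z. B z = c * (\<Prod>j<n. (z - a j) / (1 - cnj (a j) * z))))"

end

(*
  Write g_k = T(z^k) (Tpow k below) and fix w with |w| = r. The test function
  1 + mu z + mu^n z^n, with mu w = r, has sup norm 1 + r + r^n on the closed r-disc; where T of it
  attains this norm, the triangle inequality forces a point y with |y| <= r, |g_0 y| = 1,
  g_1 y = w g_0 y and g_n y = w^n g_0 y. The identity theorem then gives g_n g_0^n = g_1^n g_0 on
  the disc, and since T carries the geometric series of 1/(1 - z) to a convergent series,
  psi = g_1/g_0 (Tquot, made holomorphic by remove_sings) is a holomorphic self-map of the disc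
  whose image of the closed r-disc covers the circle of radius r. The Schwarz lemma, after a
  Moebius normalisation, forces psi z = beta z; hence g_n = g_0 (beta z)^n and, by Taylor
  expansion, T f = g_0 f(beta z). The points y above now show |g_0| = 1 on |z| = r, so g_0(r z) is
  holomorphic beyond the closed unit disc and unimodular on the circle; dividing out its finitely
  many zeros by Moebius factors leaves a zero-free such function, which the maximum principle
  makes constant.
*)
theory Submission
  imports Defs "HOL-Complex_Analysis.Complex_Analysis"
begin

lemma sup_norm_r_eq_Sup_image: "sup_norm_r r f = Sup ((\<lambda>z. cmod (f z)) ` cball 0 r)"
  unfolding sup_norm_r_def by (rule arg_cong[where f = Sup]) (auto simp: mem_cball_0)

lemma norm_le_sup_norm_r:
  assumes "continuous_on (cball 0 r) f" "z \<in> cball 0 r"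
  shows "cmod (f z) \<le> sup_norm_r r f"
proof -
  have "compact ((\<lambda>z. cmod (f z)) ` cball 0 r)"
    by (intro compact_continuous_image continuous_intros assms) auto
  then have "bdd_above ((\<lambda>z. cmod (f z)) ` cball 0 r)"
    by (meson bounded_imp_bdd_above compact_imp_bounded)
  then show ?thesis
    unfolding sup_norm_r_eq_Sup_image using assms(2) by (intro cSup_upper) auto
qed

lemma sup_norm_r_eq_maximum:
  assumes "y \<in> cball 0 r" "\<And>z. z \<in> cball 0 r \<Longrightarrow> cmod (f z) \<le> cmod (f y)"
  shows "sup_norm_r r f = cmod (f y)"
  unfolding sup_norm_r_eq_Sup_image by (rule cSup_eq_maximum) (use assms in auto)

lemma sup_norm_r_attained:
  assumes "continuous_on (cball 0 r) f" "0 \<le> r"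
  obtains y where "y \<in> cball 0 r" "sup_norm_r r f = cmod (f y)"
proof -
  have "continuous_on (cball 0 r) (\<lambda>z. cmod (f z))"
    using assms(1) by (rule continuous_on_norm)
  moreover have "cball 0 r \<noteq> {}" using assms(2) by simp
  ultimately obtain y where "y \<in> cball 0 r" "\<And>z. z \<in> cball 0 r \<Longrightarrow> cmod (f z) \<le> cmod (f y)"
    using continuous_attains_sup[OF compact_cball] by blast
  then show thesis using sup_norm_r_eq_maximum that by blast
qed

lemma norm_add3_eq_sum_of_bounds:
  fixes a b c :: complex
  assumes "cmod a \<le> 1" "cmod b \<le> s" "cmod c \<le> t" "cmod (a + b + c) = 1 + s + t"
  shows "cmod a = 1 \<and> b = of_real s * a \<and> c = of_real t * a"
proof -
  have "cmod (a + b + c) \<le> cmod (a + b) + cmod c" "cmod (a + b) \<le> cmod a + cmod b"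
    by (rule norm_triangle_ineq)+
  then have ab: "cmod (a + b) = cmod a + cmod b" and abc: "cmod (a + b + c) = cmod (a + b) + cmod c"
    and na: "cmod a = 1" and nb: "cmod b = s" and nc: "cmod c = t"
    using assms by linarith+
  from ab have "cmod a *\<^sub>R b = cmod b *\<^sub>R a" by (simp add: norm_triangle_eq)
  then have b: "b = of_real s * a" using na nb by (simp add: scaleR_conv_of_real)
  from abc have "cmod (a + b) *\<^sub>R c = cmod c *\<^sub>R (a + b)" by (simp add: norm_triangle_eq)
  then have "of_real (1 + s) * c = of_real (1 + s) * (of_real t * a)"
    using ab na nb nc b by (simp add: scaleR_conv_of_real algebra_simps)
  moreover have "1 + s \<noteq> 0" using nb norm_ge_zero[of b] by linarith
  ultimately show ?thesis using na b by (simp del: of_real_add)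
qed

lemma sup_norm_r_peak_polynomial:
  assumes \<mu>: "cmod \<mu> = 1" and \<mu>w: "\<mu> * w = of_real r" and r: "0 < r"
  shows "sup_norm_r r (\<lambda>u. 1 + \<mu> * u + \<mu> ^ n * u ^ n) = 1 + r + r ^ n"
proof -
  have "cmod w = r" using \<mu>w \<mu> r by (metis abs_of_pos mult_cancel_right2 norm_mult norm_of_real)
  have pw: "cmod (1 + \<mu> * w + \<mu> ^ n * w ^ n) = 1 + r + r ^ n"
  proof -
    have "1 + \<mu> * w + \<mu> ^ n * w ^ n = of_real (1 + r + r ^ n)"
      by (simp add: \<mu>w power_mult_distrib[symmetric])
    moreover have "0 < 1 + r + r ^ n" using r by (simp add: add_pos_nonneg)
    ultimately show ?thesis by (simp only: norm_of_real abs_of_pos)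
  qed
  have "sup_norm_r r (\<lambda>u. 1 + \<mu> * u + \<mu> ^ n * u ^ n) = cmod (1 + \<mu> * w + \<mu> ^ n * w ^ n)"
  proof (rule sup_norm_r_eq_maximum)
    fix u :: complex assume u: "u \<in> cball 0 r"
    have "cmod (1 + \<mu> * u + \<mu> ^ n * u ^ n) \<le> 1 + cmod u + cmod u ^ n"
      using norm_triangle_ineq[of "1 + \<mu> * u" "\<mu> ^ n * u ^ n"] norm_triangle_ineq[of 1 "\<mu> * u"] \<mu>
      by (simp add: norm_mult norm_power)
    also have "\<dots> \<le> 1 + r + r ^ n" using u power_mono[of "cmod u" r n] by simp
    finally show "cmod (1 + \<mu> * u + \<mu> ^ n * u ^ n) \<le> cmod (1 + \<mu> * w + \<mu> ^ n * w ^ n)"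
      using pw by simp
  qed (use \<open>cmod w = r\<close> in simp)
  then show ?thesis using pw by simp
qed

lemma infinite_sphere_complex:
  assumes "0 < r" shows "infinite (sphere (0::complex) r)"
proof
  assume "finite (sphere (0::complex) r)"
  moreover have "connected (sphere (0::complex) r)" by (rule connected_sphere) simp
  ultimately obtain a where "sphere (0::complex) r = {a}"
    using connected_finite_iff_sing assms by fastforce
  moreover have "complex_of_real r \<in> sphere 0 r" "- complex_of_real r \<in> sphere 0 r"
    using assms by auto
  ultimately show False using assms by auto
qed

lemma hol_conv_powser_partial_sums:
  fixes c :: "nat \<Rightarrow> complex"
  assumes sums: "\<And>z. z \<in> ball 0 1 \<Longrightarrow> (\<lambda>k. c k * z ^ k) sums f z"
  shows "hol_conv (\<lambda>N w. \<Sum>k<N. c k * w ^ k) f"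
  unfolding hol_conv_def
proof (intro allI impI)
  fix K :: "complex set" assume K: "compact K \<and> K \<subseteq> ball 0 1"
  obtain \<rho> where \<rho>: "\<rho> < 1" "K \<subseteq> cball 0 \<rho>"
  proof (cases "K = {}")
    case True then show ?thesis using that[of 0] by auto
  next
    case False
    then obtain z where "z \<in> K" "\<forall>w\<in>K. norm w \<le> norm z"
      using continuous_attains_sup[OF _ False continuous_on_norm_id] K by blast
    then show ?thesis using that[of "norm z"] K by (auto simp: subset_iff)
  qed
  have "ereal \<rho> < 1" using \<rho>(1) by simp
  also have "1 \<le> conv_radius c"
  proof (rule conv_radius_geI_ex')
    fix t :: real assume "0 < t" "ereal t < 1"
    then show "summable (\<lambda>k. c k * of_real t ^ k)" using sums[of "of_real t"] sums_summable by auto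
  qed
  finally have "ereal \<rho> < conv_radius c" .
  from powser_uniform_limit[OF this, of 0]
  have "uniform_limit (cball 0 \<rho>) (\<lambda>N w. \<Sum>k<N. c k * w ^ k) (\<lambda>w. \<Sum>k. c k * w ^ k) sequentially"
    by simp
  then have "uniform_limit (cball 0 \<rho>) (\<lambda>N w. \<Sum>k<N. c k * w ^ k) f sequentially"
  proof (rule uniform_limit_cong'[THEN iffD1, rotated 2])
    fix w :: complex assume "w \<in> cball 0 \<rho>"
    then show "(\<Sum>k. c k * w ^ k) = f w" using sums[of w] \<rho>(1) by (simp add: sums_iff)
  qed simp
  then show "uniform_limit K (\<lambda>N w. \<Sum>k<N. c k * w ^ k) f sequentially"
    by (rule uniform_limit_on_subset) (use \<rho> in auto)
qed

lemma bounded_meromorphic_remove_sings: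
  assumes mero: "f meromorphic_on S" and S: "open S" "z \<in> S"
    and bound: "\<And>w. w \<in> S \<Longrightarrow> cmod (f w) \<le> B"
  shows "remove_sings f analytic_on {z}" "cmod (remove_sings f z) \<le> B"
proof -
  have iso: "isolated_singularity_at f z" and ness: "not_essential f z"
    using meromorphic_on_subset[OF mero, of "{z}"] S(2) by (auto simp: meromorphic_at_iff)
  have ev: "eventually (\<lambda>w. cmod (f w) \<le> B) (at z)"
    using eventually_at_in_open'[OF S] by eventually_elim (rule bound)
  have "\<not> is_pole f z"
  proof
    assume "is_pole f z"
    then have "eventually (\<lambda>w. B + 1 \<le> cmod (f w)) (at z)"
      by (simp add: is_pole_def filterlim_at_infinity_conv_norm_at_top filterlim_at_top)
    with ev have "eventually (\<lambda>w. False) (at z)" by eventually_elim simp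
    then show False by simp
  qed
  then obtain c where c: "f \<midarrow>z\<rightarrow> c" using ness by (auto simp: not_essential_def)
  then show "remove_sings f analytic_on {z}" by (rule remove_sings_analytic_at[OF iso])
  have "cmod c \<le> B" using c ev by (intro Lim_norm_ubound) auto
  then show "cmod (remove_sings f z) \<le> B" using remove_sings_eqI[OF c] by simp
qed

lemma norm_Moebius_function_antipodal:
  assumes a: "a \<noteq> 0" and r: "0 \<le> r"
  shows "cmod (Moebius_function 0 a (- of_real (r / cmod a) * a)) = (r + cmod a) / (1 + r * cmod a)"
proof -
  define s where "s = cmod a"
  define w where "w = - of_real (r / s) * a"
  have s: "0 < s" using a by (simp add: s_def)
  have "cnj a * a = of_real (s\<^sup>2)" using complex_norm_square[of a] by (simp add: s_def mult.commute)
  then have "1 - cnj a * w = of_real (1 + r * s)"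
    using s by (simp add: w_def power2_eq_square field_simps)
  moreover have "w - a = - of_real ((r + s) / s) * a" using s by (simp add: w_def field_simps)
  ultimately have "Moebius_function 0 a w = - of_real ((r + s) / s) * a / of_real (1 + r * s)"
    by (simp add: Moebius_function_simple)
  then have "cmod (Moebius_function 0 a w) = \<bar>(r + s) / s\<bar> * s / \<bar>1 + r * s\<bar>"
    by (simp only: norm_divide norm_mult norm_minus_cancel norm_of_real s_def)
  also have "\<dots> = (r + s) / (1 + r * s)" using s r by simp
  finally show ?thesis by (simp add: w_def s_def)
qed

lemma disc_self_map_fixes_origin:
  assumes hol: "f holomorphic_on ball 0 1" and into: "\<And>z. cmod z < 1 \<Longrightarrow> cmod (f z) < 1"
    and r: "0 < r" "r < 1" and cover: "sphere 0 r \<subseteq> f ` cball 0 r"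
  shows "f 0 = 0"
proof (rule ccontr)
  define a where "a = f 0"
  define s where "s = cmod a"
  assume "f 0 \<noteq> 0"
  then have s: "0 < s" "s < 1" using into[of 0] by (auto simp: s_def a_def)
  define w where "w = - of_real (r / s) * a"
  have "w \<in> f ` cball 0 r" using s r cover by (auto simp: w_def norm_mult norm_divide s_def)
  then obtain y where y: "cmod y \<le> r" "f y = w" by auto
  define F where "F = Moebius_function 0 a \<circ> f"
  have "cmod (F y) \<le> cmod y"
  proof (rule Schwarz_Lemma(1))
    show "F holomorphic_on ball 0 1" unfolding F_def
      by (rule holomorphic_on_compose_gen[OF hol Moebius_function_holomorphic])
         (use s into in \<open>auto simp: s_def\<close>)
    show "F 0 = 0" by (simp add: F_def a_def Moebius_function_eq_zero)
    show "cmod (F z) < 1" if "cmod z < 1" for z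
      unfolding F_def o_def using into[OF that] s by (intro Moebius_function_norm_lt_1) (auto simp: s_def)
  qed (use y r in auto)
  \<comment> \<open>\<open>f y\<close> points away from \<open>f 0\<close>, so the Moebius map sending \<open>f 0\<close> to \<open>0\<close> pushes it beyond \<open>r\<close>\<close>
  moreover have "cmod (F y) = (r + s) / (1 + r * s)"
    using norm_Moebius_function_antipodal[of a r] s r by (simp add: F_def y(2) w_def s_def)
  moreover have "r < (r + s) / (1 + r * s)"
  proof -
    have "r * r < 1" using r mult_strict_mono[of r 1 r 1] by simp
    then have "r * (r * s) < s" using s by (simp add: mult.assoc[symmetric])
    then show ?thesis using r s by (simp add: field_simps add_pos_pos)
  qed
  ultimately show False using y(1) by linarith
qed

lemma disc_self_map_rotation:
  assumes hol: "f holomorphic_on ball 0 1" and into: "\<And>z. cmod z < 1 \<Longrightarrow> cmod (f z) < 1"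
    and r: "0 < r" "r < 1" and cover: "sphere 0 r \<subseteq> f ` cball 0 r"
  obtains \<beta> where "cmod \<beta> = 1" "\<And>z. cmod z < 1 \<Longrightarrow> f z = \<beta> * z"
proof -
  have f0: "f 0 = 0" by (rule disc_self_map_fixes_origin[OF assms])
  have "complex_of_real r \<in> f ` cball 0 r" using cover r by auto
  then obtain y where y: "cmod y \<le> r" "f y = of_real r" by auto
  have "cmod (f y) \<le> cmod y" by (rule Schwarz_Lemma(1)[OF hol f0 into]) (use y r in auto)
  then have "cmod (f y) = cmod y" using y r by simp
  moreover have "y \<noteq> 0" using y f0 r by auto
  ultimately show thesis
    using Schwarz_Lemma(3)[OF hol f0 into] y r that by (metis le_less_trans)
qed

lemma Moebius_denominator_nonzero:
  assumes "cmod a < 1" "cmod w \<le> 1"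
  shows "1 - cnj a * w \<noteq> 0"
proof -
  have "cmod a * cmod w \<le> cmod a" using assms(2) by (simp add: mult_left_le)
  then have "cmod (cnj a * w) \<noteq> 1" using assms(1) by (simp add: norm_mult)
  then show ?thesis by auto
qed

lemma norm_1_minus_cnj_mult_eq_norm_diff:
  assumes "cmod w = 1"
  shows "cmod (1 - cnj a * w) = cmod (w - a)"
proof -
  have "w * cnj w = 1" using complex_norm_square[of w] assms by simp
  then have "cnj w * (1 - cnj a * w) = cnj (w - a)" by (simp add: algebra_simps)
  then show ?thesis using assms by (metis complex_mod_cnj mult_1 norm_mult)
qed

lemma holomorphic_on_prod_list:
  "(\<And>a. a \<in> set xs \<Longrightarrow> f a holomorphic_on S) \<Longrightarrow> (\<lambda>w. \<Prod>a\<leftarrow>xs. f a w) holomorphic_on S"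
  by (induction xs) (auto intro!: holomorphic_intros)

lemma holomorphic_divide_out_zero:
  assumes hol: "f holomorphic_on S" and S: "open S" "connected S" and \<xi>: "\<xi> \<in> S" "f \<xi> = 0"
    and nonconst: "\<not> f constant_on S"
  obtains m h where "0 < m" "h holomorphic_on S" "h \<xi> \<noteq> 0"
    "\<And>w. w \<in> S \<Longrightarrow> f w = (w - \<xi>) ^ m * h w"
proof -
  obtain g \<rho> m where g: "0 < m" "0 < \<rho>" "ball \<xi> \<rho> \<subseteq> S" "g holomorphic_on ball \<xi> \<rho>"
      "\<And>w. w \<in> ball \<xi> \<rho> \<Longrightarrow> f w = (w - \<xi>) ^ m * g w" "\<And>w. w \<in> ball \<xi> \<rho> \<Longrightarrow> g w \<noteq> 0"
    by (rule holomorphic_factor_zero_nonconstant[OF hol S \<xi> nonconst]) (rule that)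
  define h where "h w = (if w = \<xi> then g \<xi> else f w / (w - \<xi>) ^ m)" for w
  have "h holomorphic_on S" unfolding h_def
  proof (rule removable_singularity)
    show "(\<lambda>w. f w / (w - \<xi>) ^ m) holomorphic_on S - {\<xi>}"
      by (intro holomorphic_intros holomorphic_on_subset[OF hol]) auto
    have "eventually (\<lambda>w. w \<in> ball \<xi> \<rho> - {\<xi>}) (at \<xi>)"
      using g(2) by (intro eventually_at_in_open) auto
    then have "eventually (\<lambda>w. g w = f w / (w - \<xi>) ^ m) (at \<xi>)"
      by eventually_elim (auto simp: g(5))
    moreover have "g \<midarrow>\<xi>\<rightarrow> g \<xi>"
      using holomorphic_on_imp_continuous_on[OF g(4)] g(2)
      by (simp add: continuous_on_eq_continuous_at isCont_def)
    ultimately show "(\<lambda>w. f w / (w - \<xi>) ^ m) \<midarrow>\<xi>\<rightarrow> g \<xi>"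
      by (rule Lim_transform_eventually[rotated])
  qed (use S in auto)
  moreover have "h \<xi> \<noteq> 0" using g(2,6) by (simp add: h_def)
  moreover have "f w = (w - \<xi>) ^ m * h w" if "w \<in> S" for w
    using \<xi>(2) g(1) by (cases "w = \<xi>") (simp_all add: h_def)
  ultimately show thesis using that g(1) by blast
qed

lemma unimodular_on_circle_finite_zeros:
  assumes R: "1 < R" and hol: "H holomorphic_on ball 0 R"
    and circle: "\<And>w. cmod w = 1 \<Longrightarrow> cmod (H w) = 1"
  shows "finite {w \<in> ball 0 1. H w = 0}"
proof (rule ccontr)
  assume inf: "infinite {w \<in> ball 0 1. H w = 0}"
  have "{w \<in> ball 0 1. H w = 0} \<subseteq> cball 0 1" by auto
  then obtain \<xi> where \<xi>: "\<xi> \<in> cball 0 1" "\<xi> islimpt {w \<in> ball 0 1. H w = 0}"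
    using Heine_Borel_imp_Bolzano_Weierstrass[OF compact_cball inf] by blast
  have "H 1 = 0"
  proof (rule analytic_continuation[OF hol _ _ _ _ \<xi>(2)])
    show "\<xi> \<in> ball 0 R" using \<xi>(1) R by auto
  qed (use R in auto)
  then show False using circle[of 1] by simp
qed

lemma unimodular_on_circle_zero_free_constant:
  assumes R: "1 < R" and hol: "H holomorphic_on ball 0 R"
    and circle: "\<And>w. cmod w = 1 \<Longrightarrow> cmod (H w) = 1" and nz: "\<And>w. w \<in> ball 0 1 \<Longrightarrow> H w \<noteq> 0"
  obtains c where "cmod c = 1" "\<And>w. w \<in> ball 0 1 \<Longrightarrow> H w = c"
proof -
  have nz': "H w \<noteq> 0" if "w \<in> cball 0 1" for w
    using that nz circle[of w] by (cases "cmod w = 1") auto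
  have Hb: "H holomorphic_on ball 0 1" by (rule holomorphic_on_subset[OF hol]) (use R in auto)
  have Hc: "continuous_on (cball 0 1) H"
    by (rule continuous_on_subset[OF holomorphic_on_imp_continuous_on[OF hol]]) (use R in auto)
  have le: "cmod (H w) \<le> 1" if "w \<in> ball 0 1" for w
    by (rule maximum_modulus_frontier[where S = "ball 0 1"]) (use that Hb Hc circle in auto)
  have ge: "cmod (inverse (H w)) \<le> 1" if "w \<in> ball 0 1" for w
    by (rule maximum_modulus_frontier[where S = "ball 0 1"])
       (use that Hb Hc nz' circle in \<open>auto intro!: holomorphic_intros continuous_intros simp: norm_inverse\<close>)
  have one: "cmod (H w) = 1" if "w \<in> ball 0 1" for w
    using le[OF that] ge[OF that] nz[OF that] by (simp add: norm_inverse inverse_le_1_iff)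
  have "H constant_on ball 0 1"
    by (rule maximum_modulus_principle[of H "ball 0 1" "ball 0 1" 0]) (use Hb one in auto)
  then show thesis using one[of 0] that by (auto simp: constant_on_def)
qed

lemma unimodular_on_circle_divide_Moebius:
  assumes R: "1 < R" and hol: "H holomorphic_on ball 0 R"
    and circle: "\<And>w. cmod w = 1 \<Longrightarrow> cmod (H w) = 1" and \<xi>: "cmod \<xi> < 1" "H \<xi> = 0"
  obtains H1 m where "H1 holomorphic_on ball 0 R" "\<And>w. cmod w = 1 \<Longrightarrow> cmod (H1 w) = 1"
    "\<And>w. w \<in> ball 0 1 \<Longrightarrow> H w = Moebius_function 0 \<xi> w ^ m * H1 w"
    "{w \<in> ball 0 1. H1 w = 0} = {w \<in> ball 0 1. H w = 0} - {\<xi>}"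
proof -
  have "\<not> H constant_on ball 0 R"
  proof
    assume "H constant_on ball 0 R"
    then have "H 1 = H \<xi>" using \<xi>(1) R by (auto simp: constant_on_def)
    then show False using \<xi>(2) circle[of 1] by simp
  qed
  then obtain m h where mh: "0 < m" "h holomorphic_on ball 0 R" "h \<xi> \<noteq> 0"
      "\<And>w. w \<in> ball 0 R \<Longrightarrow> H w = (w - \<xi>) ^ m * h w"
    using holomorphic_divide_out_zero[OF hol open_ball connected_ball, of \<xi>] \<xi> R by auto
  define H1 where "H1 w = h w * (1 - cnj \<xi> * w) ^ m" for w
  have "H1 holomorphic_on ball 0 R" unfolding H1_def by (intro holomorphic_intros mh(2))
  moreover have "cmod (H1 w) = 1" if "cmod w = 1" for w
    using circle[OF that] mh(4)[of w] that R norm_1_minus_cnj_mult_eq_norm_diff[OF that, of \<xi>]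
    by (simp add: H1_def norm_mult norm_power mult.commute)
  moreover have "H w = Moebius_function 0 \<xi> w ^ m * H1 w" if "w \<in> ball 0 1" for w
    using Moebius_denominator_nonzero[of \<xi> w] that mh(4)[of w] R \<xi>(1)
    by (simp add: H1_def Moebius_function_simple power_divide)
  moreover have "H1 w = 0 \<longleftrightarrow> w \<noteq> \<xi> \<and> H w = 0" if "w \<in> ball 0 1" for w
    using Moebius_denominator_nonzero[of \<xi> w] mh(1,3) mh(4)[of w] that R \<xi>(1)
    by (auto simp: H1_def)
  then have "{w \<in> ball 0 1. H1 w = 0} = {w \<in> ball 0 1. H w = 0} - {\<xi>}" by auto
  ultimately show thesis using that by blast
qed

lemma unimodular_on_circle_blaschke_on_disc:
  assumes "1 < R" "H holomorphic_on ball 0 R" "\<And>w. cmod w = 1 \<Longrightarrow> cmod (H w) = 1"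
  shows "\<exists>c zs. cmod c = 1 \<and> (\<forall>a\<in>set zs. cmod a < 1) \<and>
           (\<forall>w\<in>ball 0 1. H w = c * (\<Prod>a\<leftarrow>zs. Moebius_function 0 a w))"
  using assms
proof (induction "card {w \<in> ball 0 1. H w = 0}" arbitrary: H)
  case 0
  then have "H w \<noteq> 0" if "w \<in> ball 0 1" for w
    using unimodular_on_circle_finite_zeros[OF 0(2-4)] that by auto
  then obtain c where "cmod c = 1" "\<And>w. w \<in> ball 0 1 \<Longrightarrow> H w = c"
    using unimodular_on_circle_zero_free_constant[OF 0(2-4)] by blast
  then show ?case by (intro exI[of _ c] exI[of _ "[]"]) simp
next
  case (Suc k H)
  note R = Suc.prems(1) and hol = Suc.prems(2) and circle = Suc.prems(3)
  have fin: "finite {w \<in> ball 0 1. H w = 0}"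
    by (rule unimodular_on_circle_finite_zeros[OF R hol circle])
  obtain \<xi> where \<xi>: "\<xi> \<in> {w \<in> ball 0 1. H w = 0}"
    using Suc.hyps(2) by (metis card.empty ex_in_conv nat.distinct(1))
  then have \<xi>': "cmod \<xi> < 1" "H \<xi> = 0" by auto
  obtain H1 m where H1: "H1 holomorphic_on ball 0 R" "\<And>w. cmod w = 1 \<Longrightarrow> cmod (H1 w) = 1"
    and H_eq: "\<And>w. w \<in> ball 0 1 \<Longrightarrow> H w = Moebius_function 0 \<xi> w ^ m * H1 w"
    and zeros: "{w \<in> ball 0 1. H1 w = 0} = {w \<in> ball 0 1. H w = 0} - {\<xi>}"
    using unimodular_on_circle_divide_Moebius[OF R hol circle \<xi>'] by blast
  have "k = card {w \<in> ball 0 1. H1 w = 0}"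
    unfolding zeros using Suc.hyps(2) fin \<xi> by simp
  then obtain c zs where "cmod c = 1" "\<forall>a\<in>set zs. cmod a < 1"
    "\<forall>w\<in>ball 0 1. H1 w = c * (\<Prod>a\<leftarrow>zs. Moebius_function 0 a w)"
    using Suc.hyps(1) R H1 by blast
  then show ?case using H_eq \<xi>
    by (intro exI[of _ c] exI[of _ "replicate m \<xi> @ zs"]) (auto simp: mult_ac)
qed

lemma blaschke_identity_extends:
  assumes R: "1 < R" and hol: "H holomorphic_on ball 0 R" and c: "c \<noteq> 0"
    and zs: "\<forall>a\<in>set zs. cmod a < 1"
    and disc: "\<And>w. w \<in> ball 0 1 \<Longrightarrow> H w = c * (\<Prod>a\<leftarrow>zs. Moebius_function 0 a w)"
    and w: "w \<in> ball 0 R"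
  shows "H w = c * (\<Prod>a\<leftarrow>zs. Moebius_function 0 a w)"
proof -
  define P where "P w = (\<Prod>a\<leftarrow>zs. w - a)" for w
  define Q where "Q w = (\<Prod>a\<leftarrow>zs. 1 - cnj a * w)" for w
  have quot: "(\<Prod>a\<leftarrow>zs. Moebius_function 0 a w) = P w / Q w" for w
    unfolding P_def Q_def by (induction zs) (simp_all add: Moebius_function_simple)
  have HQ: "H w * Q w = c * P w"
  proof (rule analytic_continuation_open[of "ball 0 1" "ball 0 R" "\<lambda>w. H w * Q w" "\<lambda>w. c * P w"])
    show "(\<lambda>w. H w * Q w) holomorphic_on ball 0 R" "(\<lambda>w. c * P w) holomorphic_on ball 0 R"
      unfolding P_def Q_def by (intro holomorphic_intros holomorphic_on_prod_list hol)+
    fix z :: complex assume "z \<in> ball 0 1"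
    moreover have "Q z \<noteq> 0" if "z \<in> ball 0 1"
      using Moebius_denominator_nonzero[of _ z] zs that by (auto simp: Q_def prod_list_zero_iff)
    ultimately show "H z * Q z = c * P z" using disc quot by simp
  qed (use R w in auto)
  \<comment> \<open>a zero of \<open>Q\<close> lies outside the closed disc, where \<open>P\<close> cannot vanish\<close>
  have "Q w \<noteq> 0"
  proof
    assume "Q w = 0"
    then obtain a where a: "a \<in> set zs" "cnj a * w = 1" by (auto simp: Q_def prod_list_zero_iff)
    then have "1 < cmod w"
      using Moebius_denominator_nonzero[of a w] zs by fastforce
    then have "P w \<noteq> 0" using zs by (auto simp: P_def prod_list_zero_iff)
    then show False using HQ \<open>Q w = 0\<close> c by simp
  qed
  then show ?thesis using HQ quot by (simp add: field_simps)
qed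

theorem unimodular_on_circle_blaschke:
  assumes R: "1 < R" and hol: "H holomorphic_on ball 0 R"
    and circle: "\<And>w. cmod w = 1 \<Longrightarrow> cmod (H w) = 1"
  obtains c zs where "cmod c = 1" "\<forall>a\<in>set zs. cmod a < 1"
    "\<And>w. w \<in> ball 0 R \<Longrightarrow> H w = c * (\<Prod>a\<leftarrow>zs. Moebius_function 0 a w)"
proof -
  obtain c zs where c: "cmod c = 1" and zs: "\<forall>a\<in>set zs. cmod a < 1"
    and disc: "\<And>w. w \<in> ball 0 1 \<Longrightarrow> H w = c * (\<Prod>a\<leftarrow>zs. Moebius_function 0 a w)"
    using unimodular_on_circle_blaschke_on_disc[OF assms] by blast
  have "c \<noteq> 0" using c by auto
  show thesis by (rule that[OF c zs blaschke_identity_extends[OF R hol \<open>c \<noteq> 0\<close> zs disc]])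
qed

lemma constant_or_finite_blaschke:
  assumes "cmod c = 1" "\<forall>a\<in>set zs. cmod a < 1"
  defines "B \<equiv> \<lambda>z. c * (\<Prod>a\<leftarrow>zs. Moebius_function 0 a z)"
  shows "(\<exists>k. \<forall>z. B z = k) \<or> finite_blaschke B"
proof (cases "zs = []")
  case True then show ?thesis by (simp add: B_def)
next
  case False
  have "(\<Prod>a\<leftarrow>zs. Moebius_function 0 a z) = (\<Prod>j<length zs. (z - zs ! j) / (1 - cnj (zs ! j) * z))"
    for z by (simp add: prod.list_conv_set_nth Moebius_function_simple lessThan_atLeast0)
  then have "finite_blaschke B" unfolding finite_blaschke_def B_def using assms False
    by (intro exI[of _ c] exI[of _ "length zs"] exI[of _ "nth zs"]) (auto simp: Suc_le_eq)
  then show ?thesis ..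
qed

locale sup_norm_isometry =
  fixes r :: real and T :: "(complex \<Rightarrow> complex) \<Rightarrow> complex \<Rightarrow> complex"
  assumes r: "0 < r" "r < 1" and operator: "hol_operator T"
    and isometry: "\<And>f. f holomorphic_on ball 0 1 \<Longrightarrow> sup_norm_r r (T f) = sup_norm_r r f"
begin

lemma T_holomorphic: "f holomorphic_on ball 0 1 \<Longrightarrow> T f holomorphic_on ball 0 1"
  using operator unfolding hol_operator_def by blast

lemma T_add:
  "f holomorphic_on ball 0 1 \<Longrightarrow> g holomorphic_on ball 0 1 \<Longrightarrow> z \<in> ball 0 1 \<Longrightarrow>
    T (\<lambda>w. f w + g w) z = T f z + T g z"
  using operator unfolding hol_operator_def by blast

lemma T_scale: "f holomorphic_on ball 0 1 \<Longrightarrow> z \<in> ball 0 1 \<Longrightarrow> T (\<lambda>w. c * f w) z = c * T f z"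
  using operator unfolding hol_operator_def by blast

lemma T_continuous:
  "(\<And>n. F n holomorphic_on ball 0 1) \<Longrightarrow> f holomorphic_on ball 0 1 \<Longrightarrow>
    hol_conv F f \<Longrightarrow> hol_conv (\<lambda>n. T (F n)) (T f)"
  using operator unfolding hol_operator_def by blast

lemma cball_subset_disc: "cball 0 r \<subseteq> ball 0 1"
  using r by auto

definition Tpow :: "nat \<Rightarrow> complex \<Rightarrow> complex" where
  "Tpow k = T (\<lambda>w. w ^ k)"

definition Tquot :: "complex \<Rightarrow> complex" where
  "Tquot z = Tpow 1 z / Tpow 0 z"

lemma Tpow_holomorphic: "Tpow k holomorphic_on ball 0 1"
  unfolding Tpow_def by (intro T_holomorphic holomorphic_intros)

lemma norm_Tpow_le:
  assumes "z \<in> cball 0 r"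
  shows "cmod (Tpow k z) \<le> r ^ k"
proof -
  have "sup_norm_r r (\<lambda>w. w ^ k) = cmod (complex_of_real r ^ k)"
    by (rule sup_norm_r_eq_maximum) (use r in \<open>auto simp: norm_power intro!: power_mono\<close>)
  then have "sup_norm_r r (Tpow k) = r ^ k"
    unfolding Tpow_def using r by (subst isometry) (auto intro!: holomorphic_intros simp: norm_power)
  moreover have "continuous_on (cball 0 r) (Tpow k)"
    using holomorphic_on_imp_continuous_on[OF Tpow_holomorphic] cball_subset_disc
    by (rule continuous_on_subset)
  ultimately show ?thesis using norm_le_sup_norm_r assms by metis
qed

lemma T_polynomial:
  assumes "z \<in> ball 0 1"
  shows "T (\<lambda>w. \<Sum>k<N. c k * w ^ k) z = (\<Sum>k<N. c k * Tpow k z)"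
proof (induction N)
  case 0
  then show ?case using T_scale[of "\<lambda>w. 0" z 0] assms by simp
next
  case (Suc N)
  have "T (\<lambda>w. \<Sum>k<Suc N. c k * w ^ k) z = T (\<lambda>w. \<Sum>k<N. c k * w ^ k) z + T (\<lambda>w. c N * w ^ N) z"
    using T_add[of "\<lambda>w. \<Sum>k<N. c k * w ^ k" "\<lambda>w. c N * w ^ N"] assms
    by (simp add: holomorphic_intros)
  also have "T (\<lambda>w. c N * w ^ N) z = c N * Tpow N z"
    unfolding Tpow_def using assms by (intro T_scale holomorphic_intros)
  finally show ?case using Suc by simp
qed

lemma T_powser_sums:
  assumes f: "f holomorphic_on ball 0 1" and sums: "\<And>w. w \<in> ball 0 1 \<Longrightarrow> (\<lambda>k. c k * w ^ k) sums f w"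
    and z: "z \<in> ball 0 1"
  shows "(\<lambda>k. c k * Tpow k z) sums T f z"
proof -
  have "hol_conv (\<lambda>N. T (\<lambda>w. \<Sum>k<N. c k * w ^ k)) (T f)"
    using hol_conv_powser_partial_sums[OF sums] f by (intro T_continuous holomorphic_intros) auto
  moreover have "compact {z} \<and> {z} \<subseteq> ball 0 1" using z by simp
  ultimately have "uniform_limit {z} (\<lambda>N. T (\<lambda>w. \<Sum>k<N. c k * w ^ k)) (T f) sequentially"
    unfolding hol_conv_def by blast
  then have "(\<lambda>N. T (\<lambda>w. \<Sum>k<N. c k * w ^ k) z) \<longlonglongrightarrow> T f z"
    by (rule tendsto_uniform_limitI) simp
  then show ?thesis unfolding sums_def using T_polynomial[OF z] by simp
qed

lemma T_peak_polynomial: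
  assumes "z \<in> ball 0 1"
  shows "T (\<lambda>u. 1 + \<mu> * u + \<mu> ^ n * u ^ n) z = Tpow 0 z + \<mu> * Tpow 1 z + \<mu> ^ n * Tpow n z"
proof -
  have "T (\<lambda>u. 1 + \<mu> * u + \<mu> ^ n * u ^ n) z = T (\<lambda>u. 1 + \<mu> * u) z + T (\<lambda>u. \<mu> ^ n * u ^ n) z"
    by (rule T_add) (use assms in \<open>auto intro!: holomorphic_intros\<close>)
  also have "T (\<lambda>u. 1 + \<mu> * u) z = T (\<lambda>u. 1) z + T (\<lambda>u. \<mu> * u) z"
    by (rule T_add) (use assms in \<open>auto intro!: holomorphic_intros\<close>)
  also have "T (\<lambda>u. \<mu> * u) z = \<mu> * Tpow 1 z"
    unfolding Tpow_def using T_scale[of "\<lambda>u. u" z \<mu>] assms by simp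
  also have "T (\<lambda>u. \<mu> ^ n * u ^ n) z = \<mu> ^ n * Tpow n z"
    unfolding Tpow_def by (rule T_scale) (use assms in \<open>auto intro!: holomorphic_intros\<close>)
  finally show ?thesis by (simp add: Tpow_def)
qed

lemma Tpow_peak:
  assumes w: "cmod w = r"
  obtains y where "y \<in> cball 0 r" "cmod (Tpow 0 y) = 1" "Tpow 1 y = w * Tpow 0 y"
    "Tpow n y = w ^ n * Tpow 0 y"
proof -
  define \<mu> where "\<mu> = cnj w / of_real r"
  have "cnj w * w = of_real r * of_real r"
    using complex_norm_square[of w] w by (simp add: power2_eq_square mult.commute)
  then have \<mu>w: "\<mu> * w = of_real r" using r by (simp add: \<mu>_def)
  have \<mu>: "cmod \<mu> = 1" using w r by (simp add: \<mu>_def norm_divide)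
  define p where "p u = 1 + \<mu> * u + \<mu> ^ n * u ^ n" for u
  have p_hol: "p holomorphic_on ball 0 1" unfolding p_def by (intro holomorphic_intros)
  have "sup_norm_r r p = 1 + r + r ^ n"
    unfolding p_def by (rule sup_norm_r_peak_polynomial[OF \<mu> \<mu>w r(1)])
  moreover have "continuous_on (cball 0 r) (T p)"
    using holomorphic_on_imp_continuous_on[OF T_holomorphic[OF p_hol]] cball_subset_disc
    by (rule continuous_on_subset)
  then obtain y where y: "y \<in> cball 0 r" "sup_norm_r r (T p) = cmod (T p y)"
    using sup_norm_r_attained r by (metis less_imp_le)
  moreover have "y \<in> ball 0 1" using y(1) cball_subset_disc by blast
  ultimately have "cmod (Tpow 0 y + \<mu> * Tpow 1 y + \<mu> ^ n * Tpow n y) = 1 + r + r ^ n"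
    using isometry[OF p_hol] T_peak_polynomial unfolding p_def by simp
  moreover have "cmod (Tpow 0 y) \<le> 1" "cmod (\<mu> * Tpow 1 y) \<le> r" "cmod (\<mu> ^ n * Tpow n y) \<le> r ^ n"
    using norm_Tpow_le[OF y(1), of 0] norm_Tpow_le[OF y(1), of 1] norm_Tpow_le[OF y(1), of n] \<mu>
    by (simp_all add: norm_mult norm_power)
  ultimately have "cmod (Tpow 0 y) = 1 \<and> \<mu> * Tpow 1 y = of_real r * Tpow 0 y \<and>
      \<mu> ^ n * Tpow n y = of_real (r ^ n) * Tpow 0 y"
    using norm_add3_eq_sum_of_bounds by blast
  then have "cmod (Tpow 0 y) = 1" "\<mu> * Tpow 1 y = \<mu> * (w * Tpow 0 y)"
    "\<mu> ^ n * Tpow n y = \<mu> ^ n * (w ^ n * Tpow 0 y)"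
    unfolding of_real_power \<mu>w[symmetric] by (simp_all add: power_mult_distrib mult_ac)
  moreover have "\<mu> \<noteq> 0" using \<mu> by auto
  ultimately show thesis using that y(1) by simp
qed

lemma Tpow_power_relation:
  assumes z: "z \<in> ball 0 1"
  shows "Tpow n z * Tpow 0 z ^ n = Tpow 1 z ^ n * Tpow 0 z"
proof -
  define Y where "Y = {y \<in> cball 0 r. Tpow n y * Tpow 0 y ^ n = Tpow 1 y ^ n * Tpow 0 y}"
  have "sphere 0 r \<subseteq> Tquot ` Y"
  proof
    fix w :: complex assume "w \<in> sphere 0 r"
    then obtain y where y: "y \<in> cball 0 r" "cmod (Tpow 0 y) = 1" "Tpow 1 y = w * Tpow 0 y"
      "Tpow n y = w ^ n * Tpow 0 y"
      using Tpow_peak by auto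
    then have "y \<in> Y" by (simp add: Y_def power_mult_distrib mult_ac)
    moreover have "w = Tquot y" using y(2,3) by (auto simp: Tquot_def)
    ultimately show "w \<in> Tquot ` Y" by blast
  qed
  then have "infinite Y" using infinite_sphere_complex[OF r(1)] by (meson finite_imageI finite_subset)
  moreover have "Y \<subseteq> cball 0 r" by (auto simp: Y_def)
  ultimately obtain \<xi> where \<xi>: "\<xi> \<in> cball 0 r" "\<xi> islimpt Y"
    using Heine_Borel_imp_Bolzano_Weierstrass[OF compact_cball] by blast
  define F where "F z = Tpow n z * Tpow 0 z ^ n - Tpow 1 z ^ n * Tpow 0 z" for z
  have "F z = 0"
  proof (rule analytic_continuation[of F "ball 0 1" Y \<xi>])
    show "F holomorphic_on ball 0 1" unfolding F_def by (intro holomorphic_intros Tpow_holomorphic)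
    show "\<xi> \<in> ball 0 1" using \<xi>(1) cball_subset_disc by blast
  qed (use \<xi>(2) \<open>Y \<subseteq> cball 0 r\<close> cball_subset_disc z in \<open>auto simp: Y_def F_def\<close>)
  then show ?thesis by (simp add: F_def)
qed

lemma Tpow_eq_Tquot_power:
  assumes "z \<in> ball 0 1" "Tpow 0 z \<noteq> 0"
  shows "Tpow n z = Tpow 0 z * Tquot z ^ n"
proof -
  have "Tpow n z = Tpow 1 z ^ n * Tpow 0 z / Tpow 0 z ^ n"
    using Tpow_power_relation[OF assms(1), of n] assms(2) by (simp add: eq_divide_eq)
  then show ?thesis by (simp add: Tquot_def power_divide)
qed

lemma norm_Tquot_less_1:
  assumes z: "z \<in> ball 0 1"
  shows "cmod (Tquot z) < 1"
proof (cases "Tpow 0 z = 0")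
  case True
  then show ?thesis by (simp add: Tquot_def)
next
  case False
  \<comment> \<open>\<open>T\<close> maps the geometric series \<open>1/(1 - w)\<close> to \<open>\<Sum>k. Tpow k z = Tpow 0 z \<Sum>k. Tquot z ^ k\<close>\<close>
  have "(\<lambda>k. 1 * Tpow k z) sums T (\<lambda>w. 1 / (1 - w)) z"
  proof (rule T_powser_sums[OF _ _ z])
    show "(\<lambda>w. 1 / (1 - w)) holomorphic_on ball 0 1"
      by (intro holomorphic_intros) (auto simp: dist_norm)
    show "(\<lambda>k. 1 * w ^ k) sums (1 / (1 - w))" if "w \<in> ball 0 1" for w :: complex
      using geometric_sums[of w] that by simp
  qed
  moreover have "(\<lambda>k. 1 * Tpow k z) = (\<lambda>k. Tpow 0 z * Tquot z ^ k)"
    using Tpow_eq_Tquot_power[OF z False] by (metis mult_1)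
  ultimately have "summable (\<lambda>k. Tpow 0 z * Tquot z ^ k)" by (metis sums_summable)
  then show ?thesis using False by (simp add: summable_cmult_iff summable_geometric_iff)
qed

definition psi :: "complex \<Rightarrow> complex" where
  "psi = remove_sings Tquot"

lemma Tpow_analytic: "Tpow k analytic_on ball 0 1"
  by (simp add: analytic_on_open Tpow_holomorphic)

lemma psi_eq_Tquot:
  assumes "z \<in> ball 0 1" "Tpow 0 z \<noteq> 0"
  shows "psi z = Tquot z"
proof -
  have "(\<lambda>z. Tpow 1 z / Tpow 0 z) analytic_on {z}"
    using assms by (intro analytic_on_divide analytic_on_subset[OF Tpow_analytic]) auto
  then show ?thesis unfolding psi_def Tquot_def[abs_def] by (rule remove_sings_at_analytic)
qed

lemma psi_holomorphic: "psi holomorphic_on ball 0 1"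
  and norm_psi_le_1: "z \<in> ball 0 1 \<Longrightarrow> cmod (psi z) \<le> 1"
proof -
  have "(\<lambda>z. Tpow 1 z / Tpow 0 z) meromorphic_on ball 0 1"
    by (intro meromorphic_on_divide analytic_on_imp_meromorphic_on Tpow_analytic)
  then have "Tquot meromorphic_on ball 0 1" by (simp add: Tquot_def[abs_def])
  note bounded = bounded_meromorphic_remove_sings[OF this open_ball _ less_imp_le[OF norm_Tquot_less_1]]
  have "psi analytic_on ball 0 1"
    unfolding psi_def by (subst analytic_on_analytic_at) (use bounded(1) in blast)
  then show "psi holomorphic_on ball 0 1" by (rule analytic_imp_holomorphic)
  show "z \<in> ball 0 1 \<Longrightarrow> cmod (psi z) \<le> 1" unfolding psi_def by (rule bounded(2))
qed

lemma norm_psi_less_1: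
  assumes z: "cmod z < 1"
  shows "cmod (psi z) < 1"
proof (rule ccontr)
  assume "\<not> ?thesis"
  then have "cmod (psi z) = 1" using norm_psi_le_1[of z] z by simp
  then have "psi constant_on ball 0 1"
    using z norm_psi_le_1 by (intro maximum_modulus_principle[OF psi_holomorphic, of "ball 0 1" z]) auto
  moreover obtain y where y: "y \<in> cball 0 r" "cmod (Tpow 0 y) = 1"
    using Tpow_peak[of "of_real r" 0] r by auto
  then have "y \<in> ball 0 1" "Tpow 0 y \<noteq> 0" using r by auto
  then have "cmod (psi y) < 1" using psi_eq_Tquot norm_Tquot_less_1 by simp
  ultimately show False
    using \<open>cmod (psi z) = 1\<close> \<open>y \<in> ball 0 1\<close> z by (auto simp: constant_on_def)
qed

lemma sphere_subset_psi_image: "sphere 0 r \<subseteq> psi ` cball 0 r"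
proof
  fix w :: complex assume "w \<in> sphere 0 r"
  then obtain y where y: "y \<in> cball 0 r" "cmod (Tpow 0 y) = 1" "Tpow 1 y = w * Tpow 0 y"
    using Tpow_peak[of w 0] by auto
  moreover have "Tpow 0 y \<noteq> 0" using y(2) by auto
  ultimately have "psi y = w" using psi_eq_Tquot[of y] r by (auto simp: Tquot_def)
  then show "w \<in> psi ` cball 0 r" using y(1) by blast
qed

lemma Tpow_rotation:
  obtains \<beta> where "cmod \<beta> = 1" "\<And>n z. z \<in> ball 0 1 \<Longrightarrow> Tpow n z = Tpow 0 z * (\<beta> * z) ^ n"
proof -
  obtain \<beta> where \<beta>: "cmod \<beta> = 1" "\<And>z. cmod z < 1 \<Longrightarrow> psi z = \<beta> * z"
    using disc_self_map_rotation[OF psi_holomorphic norm_psi_less_1 r sphere_subset_psi_image] by blast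
  define S where "S = ball 0 1 \<inter> Tpow 0 -` (- {0})"
  have "open S" unfolding S_def
    by (rule continuous_open_preimage) (auto intro: holomorphic_on_imp_continuous_on Tpow_holomorphic)
  obtain y where "y \<in> cball 0 r" "cmod (Tpow 0 y) = 1"
    using Tpow_peak[of "of_real r" 0] r by auto
  then have "y \<in> S" using r by (auto simp: S_def)
  have "Tpow n z = Tpow 0 z * (\<beta> * z) ^ n" if "z \<in> ball 0 1" for n z
  proof (rule analytic_continuation_open[of S "ball 0 1" "Tpow n" "\<lambda>z. Tpow 0 z * (\<beta> * z) ^ n"])
    show "(\<lambda>z. Tpow 0 z * (\<beta> * z) ^ n) holomorphic_on ball 0 1"
      by (intro holomorphic_intros Tpow_holomorphic)
    fix x assume "x \<in> S"
    then show "Tpow n x = Tpow 0 x * (\<beta> * x) ^ n"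
      using Tpow_eq_Tquot_power[of x n] psi_eq_Tquot[of x] \<beta>(2)[of x] by (auto simp: S_def)
  qed (use \<open>open S\<close> \<open>y \<in> S\<close> that Tpow_holomorphic in \<open>auto simp: S_def\<close>)
  with \<beta>(1) show thesis by (rule that)
qed

context
  fixes \<beta> :: complex
  assumes \<beta>: "cmod \<beta> = 1"
    and Tpow_eq: "\<And>n z. z \<in> ball 0 1 \<Longrightarrow> Tpow n z = Tpow 0 z * (\<beta> * z) ^ n"
begin

lemma T_eq_weighted_composition:
  assumes f: "f holomorphic_on ball 0 1" and z: "z \<in> ball 0 1"
  shows "T f z = Tpow 0 z * f (\<beta> * z)"
proof -
  define c where "c k = (deriv ^^ k) f 0 / fact k" for k
  have taylor: "(\<lambda>k. c k * w ^ k) sums f w" if "w \<in> ball 0 1" for w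
    using holomorphic_power_series[OF f that] by (simp add: c_def)
  have "\<beta> * z \<in> ball 0 1" using z \<beta> by (simp add: norm_mult)
  then have "(\<lambda>k. Tpow 0 z * (c k * (\<beta> * z) ^ k)) sums (Tpow 0 z * f (\<beta> * z))"
    by (intro sums_mult taylor)
  moreover have "(\<lambda>k. Tpow 0 z * (c k * (\<beta> * z) ^ k)) = (\<lambda>k. c k * Tpow k z)"
    using Tpow_eq[OF z] by (metis mult.left_commute)
  ultimately show ?thesis using T_powser_sums[OF f taylor z] by (metis sums_unique2)
qed

lemma norm_Tpow0_sphere:
  assumes y: "cmod y = r"
  shows "cmod (Tpow 0 y) = 1"
proof -
  obtain x where x: "x \<in> cball 0 r" "cmod (Tpow 0 x) = 1" "Tpow 1 x = (\<beta> * y) * Tpow 0 x"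
    using Tpow_peak[of "\<beta> * y" 0] y \<beta> by (auto simp: norm_mult)
  moreover have "Tpow 1 x = (\<beta> * x) * Tpow 0 x"
    using Tpow_eq[of x 1] x(1) r by (simp add: mult.commute)
  ultimately have "x = y" using \<beta> by auto
  then show ?thesis using x(2) by simp
qed

end

lemma Tpow0_dilation_holomorphic: "(\<lambda>w. Tpow 0 (of_real r * w)) holomorphic_on ball 0 (1 / r)"
proof -
  have "cmod (of_real r * w) < 1" if "cmod w < 1 / r" for w
    using that r by (simp add: norm_mult field_simps)
  then have "(\<lambda>w. of_real r * w) ` ball 0 (1 / r) \<subseteq> ball (0::complex) 1" by auto
  then show ?thesis
    using holomorphic_on_compose_gen[OF _ Tpow_holomorphic, of "\<lambda>w. of_real r * w"]
    by (simp add: o_def holomorphic_intros)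
qed

theorem weighted_composition_blaschke:
  obtains \<beta> c zs where "cmod \<beta> = 1" "cmod c = 1" "\<forall>a\<in>set zs. cmod a < 1"
    "\<And>f z. f holomorphic_on ball 0 1 \<Longrightarrow> z \<in> ball 0 1 \<Longrightarrow>
      T f z = c * (\<Prod>a\<leftarrow>zs. Moebius_function 0 a (z / of_real r)) * f (\<beta> * z)"
proof -
  obtain \<beta> where \<beta>: "cmod \<beta> = 1"
    and Tpow_\<beta>: "\<And>n z. z \<in> ball 0 1 \<Longrightarrow> Tpow n z = Tpow 0 z * (\<beta> * z) ^ n"
    using Tpow_rotation by blast
  have "cmod (Tpow 0 (of_real r * w)) = 1" if "cmod w = 1" for w
  proof -
    have "cmod (of_real r * w) = r" using that r by (simp add: norm_mult)
    with \<beta> Tpow_\<beta> show ?thesis by (rule norm_Tpow0_sphere)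
  qed
  then obtain c zs where c: "cmod c = 1" and zs: "\<forall>a\<in>set zs. cmod a < 1"
    and B: "\<And>w. w \<in> ball 0 (1 / r) \<Longrightarrow>
      Tpow 0 (of_real r * w) = c * (\<Prod>a\<leftarrow>zs. Moebius_function 0 a w)"
    using unimodular_on_circle_blaschke[OF _ Tpow0_dilation_holomorphic] r by auto
  have "T f z = c * (\<Prod>a\<leftarrow>zs. Moebius_function 0 a (z / of_real r)) * f (\<beta> * z)"
    if "f holomorphic_on ball 0 1" "z \<in> ball 0 1" for f z
  proof -
    from \<beta> Tpow_\<beta> that have "T f z = Tpow 0 z * f (\<beta> * z)" by (rule T_eq_weighted_composition)
    then show ?thesis
      using B[of "z / of_real r"] that(2) r by (simp add: norm_divide divide_strict_right_mono)
  qed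
  with \<beta> c zs show thesis by (rule that)
qed

end

theorem theorem4p2:
  fixes r :: real and T :: "(complex \<Rightarrow> complex) \<Rightarrow> (complex \<Rightarrow> complex)"
  assumes "0 < r" "r < 1"
    and "hol_operator T"
    and "\<And>f. f holomorphic_on ball 0 1 \<Longrightarrow> sup_norm_r r (T f) = sup_norm_r r f"
  shows "\<exists>B1 \<beta>. ((\<exists>c. \<forall>z. B1 z = c) \<or> finite_blaschke B1) \<and> cmod \<beta> = 1 \<and>
           (\<forall>f. f holomorphic_on ball 0 1 \<longrightarrow>
              (\<forall>z\<in>ball 0 1. T f z = B1 (z / of_real r) * f (\<beta> * z)))"
proof -
  interpret sup_norm_isometry r T by unfold_locales (use assms in auto)
  obtain \<beta> c zs where \<beta>: "cmod \<beta> = 1" and c: "cmod c = 1" and zs: "\<forall>a\<in>set zs. cmod a < 1"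
    and T_eq: "\<And>f z. f holomorphic_on ball 0 1 \<Longrightarrow> z \<in> ball 0 1 \<Longrightarrow>
      T f z = c * (\<Prod>a\<leftarrow>zs. Moebius_function 0 a (z / of_real r)) * f (\<beta> * z)"
    using weighted_composition_blaschke by blast
  define B1 where "B1 z = c * (\<Prod>a\<leftarrow>zs. Moebius_function 0 a z)" for z
  have "(\<exists>k. \<forall>z. B1 z = k) \<or> finite_blaschke B1"
    using constant_or_finite_blaschke[OF c zs] by (simp add: B1_def[abs_def])
  moreover have "\<forall>f. f holomorphic_on ball 0 1 \<longrightarrow> (\<forall>z\<in>ball 0 1. T f z = B1 (z / of_real r) * f (\<beta> * z))"
    using T_eq by (simp add: B1_def)
  ultimately show ?thesis using \<beta> by blast
qed

end
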